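(* Let $N\ge1$ and for $1\le i\le N$ and integers $x\ge1$ let $\Theta_i(x)=\binom{x+i-2}{x-1}$. Then for all $1\le i,j\le N$, \[\sum_{x=1}^\infty\sum_{y=1}^\infty\Theta_i(x)\,Q_{1,1}(x,y)\,\Theta_j(y)=Q_{i+1,j+1}(1,1).\]
   Context: Fix $\alpha\ge0$, $t\ge0$. For integers $k,\ell,x,y$, \[Q_{k,\ell}(x,y)=\alpha^2\oint_\beta\frac{{\rm d} v}{2\pi\mathrm{i}}\oint_\beta\frac{{\rm d} w}{2\pi\mathrm{i}}\frac{v-w}{1-v-w}\frac{w^{k-x}\mathrm{e}^{t(w-1)}}{(w-\alpha)(w-1)^k}\frac{v^{\ell-y}\mathrm{e}^{t(v-1)}}{(v-\alpha)(v-1)^\ell},\] where $\beta$ is a positively oriented closed contour surrounding $0,1,\alpha,1-\alpha$ and omitting other singularities (the apparent singularity at $v+w=1$ contributes nothing). *)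

theory Defs
  imports "HOL-Complex_Analysis.Complex_Analysis"
begin

definition Q_integrand :: "real \<Rightarrow> real \<Rightarrow> int \<Rightarrow> int \<Rightarrow> int \<Rightarrow> int \<Rightarrow> complex \<Rightarrow> complex \<Rightarrow> complex" where
  "Q_integrand \<alpha> t k l x y v w =
     (v - w) / (1 - v - w)
     * (w powi (k - x) * exp (of_real t * (w - 1)) / ((w - of_real \<alpha>) * (w - 1) powi k))
     * (v powi (l - y) * exp (of_real t * (v - 1)) / ((v - of_real \<alpha>) * (v - 1) powi l))"

text \<open>Realization of the contour beta: circles centred at 1/2 (which surround 0, 1, alpha, 1-alpha,
  the only singularities other than v+w=1).  The v-circle has radius alpha+2, the w-circle radius
  alpha+3; the radii differ so that v+w=1 never occurs on the contours (if |v-1/2| = |w-1/2| were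
  allowed, w = 1-v would lie on the contour).  By the stated fact that the apparent singularity
  at v+w=1 contributes nothing, this choice is immaterial.\<close>
definition Q :: "real \<Rightarrow> real \<Rightarrow> int \<Rightarrow> int \<Rightarrow> int \<Rightarrow> int \<Rightarrow> complex" where
  "Q \<alpha> t k l x y =
     complex_of_real (\<alpha>^2) *
     contour_integral (circlepath (1/2) (\<alpha> + 2))
       (\<lambda>v. contour_integral (circlepath (1/2) (\<alpha> + 3))
               (\<lambda>w. Q_integrand \<alpha> t k l x y v w) / (2 * pi * \<i>)) / (2 * pi * \<i>)"

definition Theta :: "nat \<Rightarrow> nat \<Rightarrow> nat" where
  "Theta i x = (x + i - 2) choose (x - 1)"

end

theory Submission
  imports Defs
begin

(*
  The weights are negative binomial coefficients: with u = 1/w,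
  \<Sum>_{m \<ge> 0} Theta_i(m+1) u^m = (1 - u)^-i = (w / (w - 1))^i.
  In Q_{1,1}(x, y) the index x enters only through the factor w^-(x-1) of the integrand,
  so summing Theta_i(x) against it multiplies the w-part by (w / (w - 1))^i, turning it
  into the w-part of Q_{i+1,.}(1, .); likewise in v.  On the contours |w| \<ge> 5/2 and
  |v| \<ge> 3/2, so both series converge uniformly and may be summed under the two
  contour integrals.
*)

lemma contour_integral_mult_left:
  "contour_integral g (\<lambda>x. f x * c) = contour_integral g f * c"
proof (cases "f contour_integrable_on g \<or> c = 0")
  case True
  then show ?thesis by (auto simp: contour_integral_rmul)
next
  case False
  then show ?thesis by (simp add: not_integrable_contour_integral contour_integrable_rmul_iff)
qed

lemma contour_integral_mult_right:
  "contour_integral g (\<lambda>x. c * f x) = c * contour_integral g f"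
  using contour_integral_mult_left[of g f c] by (simp add: mult.commute)

lemma contour_integral_divide:
  "contour_integral g (\<lambda>x. f x / c) = contour_integral g f / c"
  using contour_integral_mult_left[of g f "inverse c"] by (simp add: divide_inverse)

lemma contour_integral_circlepath_sums:
  fixes g :: "nat \<Rightarrow> complex \<Rightarrow> complex"
  assumes "0 < r" and cont: "\<And>n. continuous_on (sphere c r) (g n)"
    and bound: "\<And>n z. z \<in> sphere c r \<Longrightarrow> norm (g n z) \<le> M n" and "summable M"
  shows "(\<lambda>n. contour_integral (circlepath c r) (g n))
           sums contour_integral (circlepath c r) (\<lambda>z. \<Sum>n. g n z)"
proof -
  have integrable: "g n contour_integrable_on circlepath c r" for n
    using cont \<open>0 < r\<close> by (intro contour_integrable_continuous_circlepath) auto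
  have uniform: "uniform_limit (sphere c r) (\<lambda>N z. \<Sum>n<N. g n z) (\<lambda>z. \<Sum>n. g n z) sequentially"
    using bound \<open>summable M\<close> by (rule Weierstrass_m_test)
  have "(\<lambda>N. contour_integral (circlepath c r) (\<lambda>z. \<Sum>n<N. g n z))
               \<longlonglongrightarrow> contour_integral (circlepath c r) (\<lambda>z. \<Sum>n. g n z)"
    by (rule contour_integral_uniform_limit_circlepath(2)[OF _ uniform _ \<open>0 < r\<close>])
       (auto intro!: always_eventually contour_integrable_sum integrable)
  then show ?thesis
    unfolding sums_def by (simp add: contour_integral_sum integrable)
qed

lemma contour_integral_circlepath_mult_sums:
  fixes \<phi> :: "complex \<Rightarrow> complex" and g :: "nat \<Rightarrow> complex \<Rightarrow> complex"
  assumes "0 < r" and "continuous_on (sphere c r) \<phi>" and "\<And>n. continuous_on (sphere c r) (g n)"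
    and bound: "\<And>n z. z \<in> sphere c r \<Longrightarrow> norm (g n z) \<le> M n" and "summable M"
  shows "(\<lambda>n. contour_integral (circlepath c r) (\<lambda>z. \<phi> z * g n z))
           sums contour_integral (circlepath c r) (\<lambda>z. \<phi> z * (\<Sum>n. g n z))"
proof -
  obtain B where "B \<ge> 0" and B: "\<And>z. z \<in> sphere c r \<Longrightarrow> norm (\<phi> z) \<le> B"
    using continuous_on_compact_bound[OF compact_sphere assms(2)] by blast
  have "(\<lambda>n. contour_integral (circlepath c r) (\<lambda>z. \<phi> z * g n z))
          sums contour_integral (circlepath c r) (\<lambda>z. \<Sum>n. \<phi> z * g n z)"
  proof (rule contour_integral_circlepath_sums[where M = "\<lambda>n. B * M n"])
    show "norm (\<phi> z * g n z) \<le> B * M n" if "z \<in> sphere c r" for n z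
      unfolding norm_mult using that \<open>B \<ge> 0\<close> by (intro mult_mono B bound) auto
  qed (use assms in \<open>auto intro!: continuous_intros summable_mult\<close>)
  also have "contour_integral (circlepath c r) (\<lambda>z. \<Sum>n. \<phi> z * g n z)
               = contour_integral (circlepath c r) (\<lambda>z. \<phi> z * (\<Sum>n. g n z))"
  proof (rule contour_integral_eq)
    fix z assume "z \<in> path_image (circlepath c r)"
    with \<open>0 < r\<close> have "summable (\<lambda>n. g n z)"
      by (intro summable_comparison_test[OF _ \<open>summable M\<close>]) (auto intro!: exI bound)
    then show "(\<Sum>n. \<phi> z * g n z) = \<phi> z * (\<Sum>n. g n z)"
      by (rule suminf_mult)
  qed
  finally show ?thesis .
qed

lemma norm_contour_integral_circlepath_le:
  assumes "0 < r" and "continuous_on (sphere c r) f"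
    and bound: "\<And>z. z \<in> sphere c r \<Longrightarrow> norm (f z) \<le> B"
  shows "norm (contour_integral (circlepath c r) f) \<le> B * (2 * pi * r)"
proof (rule has_contour_integral_bound_circlepath[OF has_contour_integral_integral])
  show "f contour_integrable_on circlepath c r"
    using assms by (intro contour_integrable_continuous_circlepath) auto
  show "0 \<le> B"
    using bound[of "c + of_real r"] \<open>0 < r\<close> by (auto simp: dist_norm intro: order_trans[OF norm_ge_zero])
qed (use assms in \<open>auto simp: dist_norm norm_minus_commute\<close>)

lemma continuous_on_contour_integral_circlepath:
  fixes f :: "complex \<Rightarrow> complex \<Rightarrow> complex"
  assumes "compact S" and "0 < r" and cont: "continuous_on (S \<times> sphere c r) (\<lambda>(v, w). f v w)"
  shows "continuous_on S (\<lambda>v. contour_integral (circlepath c r) (f v))"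
  unfolding continuous_on_iff
proof (intro ballI allI impI)
  have integrable: "f v contour_integrable_on circlepath c r" if "v \<in> S" for v
    using \<open>0 < r\<close> that
    by (intro contour_integrable_continuous_circlepath continuous_on_compose_Pair[OF cont])
       (auto intro: continuous_intros)
  fix v and e :: real assume "v \<in> S" and "0 < e"
  define \<epsilon> where "\<epsilon> = e / (4 * pi * r)"
  have "0 < \<epsilon>" using \<open>0 < e\<close> \<open>0 < r\<close> by (simp add: \<epsilon>_def)
  have "uniformly_continuous_on (S \<times> sphere c r) (\<lambda>(v, w). f v w)"
    using assms by (intro compact_uniformly_continuous compact_Times) auto
  then obtain d where "0 < d" and d: "\<And>p p'. p \<in> S \<times> sphere c r \<Longrightarrow> p' \<in> S \<times> sphere c r \<Longrightarrow>
      dist p' p < d \<Longrightarrow> dist ((\<lambda>(v, w). f v w) p') ((\<lambda>(v, w). f v w) p) < \<epsilon>"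
    using \<open>0 < \<epsilon>\<close> unfolding uniformly_continuous_on_def by metis
  show "\<exists>d>0. \<forall>v'\<in>S. dist v' v < d \<longrightarrow>
      dist (contour_integral (circlepath c r) (f v')) (contour_integral (circlepath c r) (f v)) < e"
  proof (intro exI[of _ d] conjI ballI impI \<open>0 < d\<close>)
    fix v' assume "v' \<in> S" and "dist v' v < d"
    have "norm (f v' w - f v w) \<le> \<epsilon>" if "norm (w - c) = r" for w
      using d[of "(v, w)" "(v', w)"] \<open>v \<in> S\<close> \<open>v' \<in> S\<close> \<open>dist v' v < d\<close> that
      by (simp add: dist_norm dist_Pair_Pair norm_minus_commute)
    then have "norm (contour_integral (circlepath c r) (\<lambda>w. f v' w - f v w)) \<le> \<epsilon> * (2 * pi * r)"
      using \<open>0 < r\<close> \<open>0 < \<epsilon>\<close> \<open>v \<in> S\<close> \<open>v' \<in> S\<close>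
      by (intro has_contour_integral_bound_circlepath[OF has_contour_integral_integral])
         (auto intro!: contour_integrable_diff integrable)
    also have "\<dots> < e"
      using \<open>0 < e\<close> \<open>0 < r\<close> by (simp add: \<epsilon>_def)
    finally show "dist (contour_integral (circlepath c r) (f v')) (contour_integral (circlepath c r) (f v)) < e"
      by (simp add: dist_norm contour_integral_diff integrable \<open>v \<in> S\<close> \<open>v' \<in> S\<close>)
  qed
qed

lemma contour_integral_circlepath_product_series:
  fixes h g :: "nat \<Rightarrow> complex \<Rightarrow> complex"
  assumes "0 < r"
    and h: "\<And>m. continuous_on (sphere c r) (h m)"
    and h_bound: "\<And>m z. z \<in> sphere c r \<Longrightarrow> norm (h m z) \<le> H m" and "summable H"
    and g: "\<And>n. continuous_on (sphere c r) (g n)"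
    and g_bound: "\<And>n z. z \<in> sphere c r \<Longrightarrow> norm (g n z) \<le> G n" and "summable G"
  shows "summable (\<lambda>n. contour_integral (circlepath c r) (\<lambda>z. h m z * g n z))"
    and "(\<lambda>m. \<Sum>n. contour_integral (circlepath c r) (\<lambda>z. h m z * g n z))
           sums contour_integral (circlepath c r) (\<lambda>z. (\<Sum>m. h m z) * (\<Sum>n. g n z))"
proof -
  have inner: "(\<lambda>n. contour_integral (circlepath c r) (\<lambda>z. h m z * g n z))
                 sums contour_integral (circlepath c r) (\<lambda>z. (\<Sum>n. g n z) * h m z)" for m
    using contour_integral_circlepath_mult_sums[OF \<open>0 < r\<close> h g g_bound \<open>summable G\<close>]
    by (simp add: mult.commute)
  then show "summable (\<lambda>n. contour_integral (circlepath c r) (\<lambda>z. h m z * g n z))" for m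
    by (rule sums_summable)
  have "continuous_on (sphere c r) (\<lambda>z. \<Sum>n. g n z)"
    by (rule uniform_limit_theorem[OF _ Weierstrass_m_test[OF g_bound \<open>summable G\<close>]])
       (auto intro!: always_eventually continuous_intros g)
  from contour_integral_circlepath_mult_sums[OF \<open>0 < r\<close> this h h_bound \<open>summable H\<close>]
  have "(\<lambda>m. \<Sum>n. contour_integral (circlepath c r) (\<lambda>z. h m z * g n z))
          sums contour_integral (circlepath c r) (\<lambda>z. (\<Sum>n. g n z) * (\<Sum>m. h m z))"
    by (simp only: inner[THEN sums_unique, symmetric])
  then show "(\<lambda>m. \<Sum>n. contour_integral (circlepath c r) (\<lambda>z. h m z * g n z))
               sums contour_integral (circlepath c r) (\<lambda>z. (\<Sum>m. h m z) * (\<Sum>n. g n z))"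
    by (simp add: mult.commute)
qed

lemma contour_integral_circlepath_double_series:
  fixes K :: "complex \<Rightarrow> complex \<Rightarrow> complex" and f g :: "nat \<Rightarrow> complex \<Rightarrow> complex"
  assumes "0 < r" and "0 < s"
    and K: "continuous_on (sphere a r \<times> sphere b s) (\<lambda>(v, w). K v w)"
    and f: "\<And>m. continuous_on (sphere b s) (f m)"
    and f_bound: "\<And>m w. w \<in> sphere b s \<Longrightarrow> norm (f m w) \<le> F m" and "summable F"
    and g: "\<And>n. continuous_on (sphere a r) (g n)"
    and g_bound: "\<And>n v. v \<in> sphere a r \<Longrightarrow> norm (g n v) \<le> G n" and "summable G"
  shows "summable (\<lambda>n. contour_integral (circlepath a r)
                   (\<lambda>v. contour_integral (circlepath b s) (\<lambda>w. K v w * f m w) * g n v))"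
    and "(\<lambda>m. \<Sum>n. contour_integral (circlepath a r)
                   (\<lambda>v. contour_integral (circlepath b s) (\<lambda>w. K v w * f m w) * g n v))
           sums contour_integral (circlepath a r)
                  (\<lambda>v. contour_integral (circlepath b s) (\<lambda>w. K v w * (\<Sum>m. f m w)) * (\<Sum>n. g n v))"
proof -
  define h where "h m v = contour_integral (circlepath b s) (\<lambda>w. K v w * f m w)" for m v
  obtain B where "0 \<le> B" and B: "\<And>p. p \<in> sphere a r \<times> sphere b s \<Longrightarrow> norm ((\<lambda>(v, w). K v w) p) \<le> B"
    using continuous_on_compact_bound[OF compact_Times[OF compact_sphere compact_sphere] K] by blast
  have K_v: "continuous_on (sphere b s) (K v)" if "v \<in> sphere a r" for v
    using continuous_on_compose_Pair[OF K, of "sphere b s" "\<lambda>_. v" "\<lambda>w. w"] that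
    by (auto intro: continuous_intros)
  have h_cont: "continuous_on (sphere a r) (h m)" for m
  proof -
    have "continuous_on (sphere a r \<times> sphere b s) (\<lambda>p. (\<lambda>(v, w). K v w) p * f m (snd p))"
      by (intro continuous_intros K continuous_on_compose2[OF f continuous_on_snd]) auto
    then show ?thesis
      unfolding h_def using \<open>0 < s\<close>
      by (intro continuous_on_contour_integral_circlepath) (auto simp: case_prod_unfold)
  qed
  have h_bound: "norm (h m v) \<le> B * (2 * pi * s) * F m" if "v \<in> sphere a r" for m v
  proof -
    have "norm (h m v) \<le> B * F m * (2 * pi * s)"
      unfolding h_def
    proof (rule norm_contour_integral_circlepath_le[OF \<open>0 < s\<close>])
      show "continuous_on (sphere b s) (\<lambda>w. K v w * f m w)"
        using that by (intro continuous_intros K_v f)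
      show "norm (K v w * f m w) \<le> B * F m" if "w \<in> sphere b s" for w
        using B[of "(v, w)"] f_bound[OF that] \<open>v \<in> sphere a r\<close> that \<open>0 \<le> B\<close>
        unfolding norm_mult by (intro mult_mono) auto
    qed
    then show ?thesis by (simp add: mult_ac)
  qed
  have h_suminf: "(\<Sum>m. h m v) = contour_integral (circlepath b s) (\<lambda>w. K v w * (\<Sum>m. f m w))"
    if "v \<in> sphere a r" for v
    using contour_integral_circlepath_mult_sums[OF \<open>0 < s\<close> K_v[OF that] f f_bound \<open>summable F\<close>]
    by (simp add: h_def sums_iff)
  note product_series = contour_integral_circlepath_product_series[OF \<open>0 < r\<close> h_cont h_bound
      summable_mult[OF \<open>summable F\<close>] g g_bound \<open>summable G\<close>]
  show "summable (\<lambda>n. contour_integral (circlepath a r)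
                   (\<lambda>v. contour_integral (circlepath b s) (\<lambda>w. K v w * f m w) * g n v))" for m
    using product_series(1) by (simp add: h_def)
  have "contour_integral (circlepath a r) (\<lambda>v. (\<Sum>m. h m v) * (\<Sum>n. g n v))
      = contour_integral (circlepath a r)
          (\<lambda>v. contour_integral (circlepath b s) (\<lambda>w. K v w * (\<Sum>m. f m w)) * (\<Sum>n. g n v))"
    using \<open>0 < r\<close> by (intro contour_integral_eq) (simp add: h_suminf)
  then show "(\<lambda>m. \<Sum>n. contour_integral (circlepath a r)
                   (\<lambda>v. contour_integral (circlepath b s) (\<lambda>w. K v w * f m w) * g n v))
           sums contour_integral (circlepath a r)
                  (\<lambda>v. contour_integral (circlepath b s) (\<lambda>w. K v w * (\<Sum>m. f m w)) * (\<Sum>n. g n v))"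
    using product_series(2) by (simp add: h_def)
qed

definition Q_factor :: "real \<Rightarrow> real \<Rightarrow> int \<Rightarrow> int \<Rightarrow> complex \<Rightarrow> complex" where
  "Q_factor \<alpha> t k x w = w powi (k - x) * exp (of_real t * (w - 1)) / ((w - of_real \<alpha>) * (w - 1) powi k)"

lemma Q_integrand_eq:
  "Q_integrand \<alpha> t k l x y v w = (v - w) / (1 - v - w) * Q_factor \<alpha> t k x w * Q_factor \<alpha> t l y v"
  by (simp add: Q_integrand_def Q_factor_def)

definition Q_contour_integral :: "real \<Rightarrow> (complex \<Rightarrow> complex) \<Rightarrow> (complex \<Rightarrow> complex) \<Rightarrow> complex" where
  "Q_contour_integral \<alpha> f g =
     contour_integral (circlepath (1/2) (\<alpha> + 2))
       (\<lambda>v. contour_integral (circlepath (1/2) (\<alpha> + 3)) (\<lambda>w. (v - w) / (1 - v - w) * f w) * g v)"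

lemma Q_eq_Q_contour_integral:
  "Q \<alpha> t k l x y = complex_of_real (\<alpha>^2) / (2 * pi * \<i>)^2 *
     Q_contour_integral \<alpha> (Q_factor \<alpha> t k x) (Q_factor \<alpha> t l y)"
  unfolding Q_def Q_contour_integral_def Q_integrand_eq contour_integral_mult_left contour_integral_divide
  by (simp add: power2_eq_square)

lemma continuous_on_Q_factor:
  assumes "0 \<notin> S" and "1 \<notin> S" and "complex_of_real \<alpha> \<notin> S"
  shows "continuous_on S (Q_factor \<alpha> t k x)"
  unfolding Q_factor_def using assms
  by (intro continuous_intros) (auto simp: power_int_eq_0_iff)

lemma Q_factor_shift_x:
  assumes "w \<noteq> 0"
  shows "Q_factor \<alpha> t k (x + int m) w = (1 / w) ^ m * Q_factor \<alpha> t k x w"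
proof -
  have "w powi (k - (x + int m)) = (1 / w) ^ m * w powi (k - x)"
    using assms by (simp add: power_int_diff power_int_add power_one_over field_simps)
  then show ?thesis by (simp add: Q_factor_def)
qed

lemma Q_factor_shift_k:
  assumes "w \<noteq> 0" and "w \<noteq> 1"
  shows "Q_factor \<alpha> t (k + int i) x w = (w / (w - 1)) ^ i * Q_factor \<alpha> t k x w"
proof -
  have "w powi (k + int i - x) = w ^ i * w powi (k - x)"
    using assms by (simp add: power_int_add power_int_diff field_simps)
  moreover have "(w - 1) powi (k + int i) = (w - 1) ^ i * (w - 1) powi k"
    using assms by (simp add: power_int_add)
  ultimately show ?thesis
    using assms by (simp add: Q_factor_def power_divide mult_ac)
qed

lemma Theta_Suc: "Theta i (Suc m) = (m + i - 1) choose m"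
  by (simp add: Theta_def)

lemma Theta_sums:
  fixes u :: complex
  assumes "norm u < 1"
  shows "(\<lambda>m. of_nat (Theta i (Suc m)) * u ^ m) sums (1 / (1 - u) ^ i)"
proof (cases "i = 0")
  case True
  then have "(\<lambda>m. of_nat (Theta i (Suc m)) * u ^ m) = (\<lambda>m. if m = 0 then 1 else 0)"
    by (auto simp: fun_eq_iff Theta_Suc)
  then show ?thesis
    using True sums_single[of 0 "\<lambda>_. 1::complex"] by (simp add: if_distrib)
next
  case False
  have "(\<lambda>m. (- of_nat i gchoose m) * (- u) ^ m) sums (1 + - u) powr (- of_nat i)"
    using assms by (intro gen_binomial_complex) simp
  moreover have "(- of_nat i gchoose m) * (- u) ^ m = of_nat (Theta i (Suc m)) * u ^ m" for m
  proof -
    have "(- of_nat i gchoose m :: complex) = (-1) ^ m * ((of_nat i + of_nat m - 1) gchoose m)"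
      by (rule gbinomial_minus)
    also have "(of_nat i + of_nat m - 1 :: complex) = of_nat (m + i - 1)"
      using False by (simp add: of_nat_diff)
    finally have "(- of_nat i gchoose m :: complex) = (-1) ^ m * of_nat (Theta i (Suc m))"
      by (simp add: Theta_Suc binomial_gbinomial)
    then have "(- of_nat i gchoose m) * (- u) ^ m
                 = ((-1) ^ m * (-1) ^ m) * (of_nat (Theta i (Suc m)) * u ^ m)"
      by (simp only: power_minus[of u] mult_ac)
    also have "(-1 :: complex) ^ m * (-1) ^ m = 1"
      by (simp flip: power_mult_distrib)
    finally show ?thesis by simp
  qed
  moreover have "(1 + - u) powr (- of_nat i) = 1 / (1 - u) ^ i"
  proof -
    have "1 - u \<noteq> 0"
      using assms by auto
    then show ?thesis
      by (simp add: powr_minus_divide powr_nat'[OF disjI1])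
  qed
  ultimately show ?thesis by simp
qed

lemma Theta_Q_factor_sums:
  assumes "1 < norm w"
  shows "(\<lambda>m. of_nat (Theta i (Suc m)) * Q_factor \<alpha> t k (int (Suc m)) w)
           sums Q_factor \<alpha> t (k + int i) 1 w"
proof -
  have "w \<noteq> 0" and "w \<noteq> 1" and "norm (1 / w) < 1"
    using assms by (auto simp: norm_divide divide_less_eq_1)
  have "(\<lambda>m. of_nat (Theta i (Suc m)) * (1 / w) ^ m * Q_factor \<alpha> t k 1 w)
          sums (1 / (1 - 1 / w) ^ i * Q_factor \<alpha> t k 1 w)"
    by (rule sums_mult2[OF Theta_sums[OF \<open>norm (1 / w) < 1\<close>]])
  moreover have "Q_factor \<alpha> t k (int (Suc m)) w = (1 / w) ^ m * Q_factor \<alpha> t k 1 w" for m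
    using Q_factor_shift_x[OF \<open>w \<noteq> 0\<close>, of \<alpha> t k 1 m] by (simp add: add.commute)
  moreover have "1 / (1 - 1 / w) ^ i = (w / (w - 1)) ^ i"
    using \<open>w \<noteq> 0\<close> by (simp add: power_one_over divide_simps)
  ultimately show ?thesis
    by (simp add: Q_factor_shift_k[OF \<open>w \<noteq> 0\<close> \<open>w \<noteq> 1\<close>] mult_ac)
qed

lemma Theta_Q_factor_bound:
  assumes "compact S" and "1 < c" and far: "\<And>z. z \<in> S \<Longrightarrow> c \<le> norm z"
    and "continuous_on S (Q_factor \<alpha> t k 1)"
  obtains F where "\<And>m z. z \<in> S \<Longrightarrow> norm (of_nat (Theta i (Suc m)) * Q_factor \<alpha> t k (int (Suc m)) z) \<le> F m"
    and "summable F"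
proof -
  obtain B where "0 \<le> B" and B: "\<And>z. z \<in> S \<Longrightarrow> norm (Q_factor \<alpha> t k 1 z) \<le> B"
    using continuous_on_compact_bound[OF assms(1,4)] by blast
  show ?thesis
  proof (rule that)
    have "norm (complex_of_real (1 / c)) < 1"
      using \<open>1 < c\<close> by (simp add: norm_divide divide_less_eq_1)
    from sums_summable[OF Theta_sums[OF this, of i]]
    have "summable (\<lambda>m. real (Theta i (Suc m)) * (1 / c) ^ m)"
      by (simp flip: summable_complex_of_real)
    then show "summable (\<lambda>m. real (Theta i (Suc m)) * (1 / c) ^ m * B)"
      by (rule summable_mult2)
  next
    fix m z assume "z \<in> S"
    have "z \<noteq> 0" and "norm (1 / z) \<le> 1 / c"
      using far[OF \<open>z \<in> S\<close>] \<open>1 < c\<close> by (auto simp: norm_divide intro!: divide_left_mono mult_pos_pos)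
    have "norm (of_nat (Theta i (Suc m)) * Q_factor \<alpha> t k (int (Suc m)) z)
            = real (Theta i (Suc m)) * norm (1 / z) ^ m * norm (Q_factor \<alpha> t k 1 z)"
      using Q_factor_shift_x[OF \<open>z \<noteq> 0\<close>, of \<alpha> t k 1 m] by (simp add: add.commute norm_mult norm_power)
    also have "\<dots> \<le> real (Theta i (Suc m)) * (1 / c) ^ m * B"
      using \<open>norm (1 / z) \<le> 1 / c\<close> \<open>0 \<le> B\<close> \<open>1 < c\<close>
      by (intro mult_mono mult_left_mono power_mono B \<open>z \<in> S\<close>) auto
    finally show "norm (of_nat (Theta i (Suc m)) * Q_factor \<alpha> t k (int (Suc m)) z)
                    \<le> real (Theta i (Suc m)) * (1 / c) ^ m * B" .
  qed
qed

lemma norm_ge_if_in_sphere_half: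
  fixes z :: complex
  assumes "0 \<le> \<alpha>" and "z \<in> sphere (1/2) (\<alpha> + \<rho>)"
  shows "\<rho> - 1/2 \<le> norm z"
  using assms norm_triangle_ineq4[of z "1/2"] by (simp add: dist_norm norm_minus_commute)

lemma of_real_notin_sphere_half:
  assumes "0 \<le> \<alpha>" and "1/2 < \<rho>"
  shows "complex_of_real \<alpha> \<notin> sphere (1/2) (\<alpha> + \<rho>)"
proof -
  have "dist (1/2) (complex_of_real \<alpha>) = norm (complex_of_real (\<alpha> - 1/2))"
    by (simp add: dist_norm norm_minus_commute)
  also have "\<dots> = \<bar>\<alpha> - 1/2\<bar>"
    by (rule norm_of_real)
  finally have "dist (1/2) (complex_of_real \<alpha>) = \<bar>\<alpha> - 1/2\<bar>" .
  then show ?thesis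
    using assms by auto
qed

lemma diff_ne_0_if_in_spheres_half:
  fixes v w :: complex
  assumes "v \<in> sphere (1/2) r" and "w \<in> sphere (1/2) s" and "r \<noteq> s"
  shows "1 - v - w \<noteq> 0"
proof
  assume "1 - v - w = 0"
  then have "w = 1 - v"
    by simp
  then have "dist (1/2) w = dist (1/2) v"
    by (simp add: dist_norm norm_minus_commute)
  with assms show False by simp
qed

definition Theta_factor :: "real \<Rightarrow> real \<Rightarrow> nat \<Rightarrow> nat \<Rightarrow> complex \<Rightarrow> complex" where
  "Theta_factor \<alpha> t i m z = of_nat (Theta i (Suc m)) * Q_factor \<alpha> t 1 (int (Suc m)) z"

lemma Theta_factor_on_circle:
  assumes "0 \<le> \<alpha>" and "2 \<le> \<rho>"
  shows "continuous_on (sphere (1/2) (\<alpha> + \<rho>)) (Theta_factor \<alpha> t i m)"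
    and "z \<in> sphere (1/2) (\<alpha> + \<rho>) \<Longrightarrow> (\<Sum>m. Theta_factor \<alpha> t i m z) = Q_factor \<alpha> t (int i + 1) 1 z"
proof -
  have far: "3/2 \<le> norm z" if "z \<in> sphere (1/2) (\<alpha> + \<rho>)" for z :: complex
    using norm_ge_if_in_sphere_half[OF \<open>0 \<le> \<alpha>\<close> that] \<open>2 \<le> \<rho>\<close> by simp
  have "continuous_on (sphere (1/2) (\<alpha> + \<rho>)) (Q_factor \<alpha> t 1 (int (Suc m)))"
  proof (rule continuous_on_Q_factor)
    show "(0 :: complex) \<notin> sphere (1/2) (\<alpha> + \<rho>)" and "(1 :: complex) \<notin> sphere (1/2) (\<alpha> + \<rho>)"
      using far[of 0] far[of 1] by auto
    show "complex_of_real \<alpha> \<notin> sphere (1/2) (\<alpha> + \<rho>)"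
      using of_real_notin_sphere_half assms by simp
  qed
  then show "continuous_on (sphere (1/2) (\<alpha> + \<rho>)) (Theta_factor \<alpha> t i m)"
    unfolding Theta_factor_def by (intro continuous_intros)
  show "(\<Sum>m. Theta_factor \<alpha> t i m z) = Q_factor \<alpha> t (int i + 1) 1 z" if "z \<in> sphere (1/2) (\<alpha> + \<rho>)"
    using Theta_Q_factor_sums[of z i \<alpha> t 1] far[OF that]
    by (simp add: Theta_factor_def sums_iff add.commute)
qed

lemma Theta_factor_dominated_on_circle:
  assumes "0 \<le> \<alpha>" and "2 \<le> \<rho>"
  obtains F where "\<And>m z. z \<in> sphere (1/2) (\<alpha> + \<rho>) \<Longrightarrow> norm (Theta_factor \<alpha> t i m z) \<le> F m"
    and "summable F"
proof (rule Theta_Q_factor_bound[of "sphere (1/2) (\<alpha> + \<rho>)" "3/2" \<alpha> t 1 i])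
  show "3/2 \<le> norm z" if "z \<in> sphere (1/2) (\<alpha> + \<rho>)" for z :: complex
    using norm_ge_if_in_sphere_half[OF \<open>0 \<le> \<alpha>\<close> that] \<open>2 \<le> \<rho>\<close> by simp
  show "continuous_on (sphere (1/2) (\<alpha> + \<rho>)) (Q_factor \<alpha> t 1 1)"
    using Theta_factor_on_circle(1)[OF assms, of t 1 0] by (simp add: Theta_factor_def Theta_def)
qed (use that in \<open>auto simp: Theta_factor_def\<close>)

lemma Q_contour_integral_Theta_factor_series:
  assumes "0 \<le> \<alpha>"
  shows "summable (\<lambda>n. Q_contour_integral \<alpha> (Theta_factor \<alpha> t i m) (Theta_factor \<alpha> t j n))"
    and "(\<lambda>m. \<Sum>n. Q_contour_integral \<alpha> (Theta_factor \<alpha> t i m) (Theta_factor \<alpha> t j n))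
           sums Q_contour_integral \<alpha> (Q_factor \<alpha> t (int i + 1) 1) (Q_factor \<alpha> t (int j + 1) 1)"
proof -
  obtain F where F: "\<And>m z. z \<in> sphere (1/2) (\<alpha> + 3) \<Longrightarrow> norm (Theta_factor \<alpha> t i m z) \<le> F m"
    and "summable F"
    using Theta_factor_dominated_on_circle[OF assms, of 3] by auto
  obtain G where G: "\<And>n z. z \<in> sphere (1/2) (\<alpha> + 2) \<Longrightarrow> norm (Theta_factor \<alpha> t j n z) \<le> G n"
    and "summable G"
    using Theta_factor_dominated_on_circle[OF assms, of 2] by auto
  have K: "continuous_on (sphere (1/2 :: complex) (\<alpha> + 2) \<times> sphere (1/2) (\<alpha> + 3))
      (\<lambda>(v, w). (v - w) / (1 - v - w))"
    using diff_ne_0_if_in_spheres_half by (auto simp: case_prod_unfold intro!: continuous_intros)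
  note double_series = contour_integral_circlepath_double_series[OF _ _ K
      Theta_factor_on_circle(1)[OF assms] F \<open>summable F\<close> Theta_factor_on_circle(1)[OF assms] G \<open>summable G\<close>]
  show "summable (\<lambda>n. Q_contour_integral \<alpha> (Theta_factor \<alpha> t i m) (Theta_factor \<alpha> t j n))"
    unfolding Q_contour_integral_def using assms by (intro double_series(1)) auto
  have "(\<Sum>m. Theta_factor \<alpha> t i m w) = Q_factor \<alpha> t (int i + 1) 1 w" if "w \<in> sphere (1/2) (\<alpha> + 3)" for w
    using Theta_factor_on_circle(2)[OF assms _ that] by simp
  moreover have "(\<Sum>n. Theta_factor \<alpha> t j n v) = Q_factor \<alpha> t (int j + 1) 1 v" if "v \<in> sphere (1/2) (\<alpha> + 2)" for v
    using Theta_factor_on_circle(2)[OF assms _ that] by simp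
  ultimately have "Q_contour_integral \<alpha> (\<lambda>w. \<Sum>m. Theta_factor \<alpha> t i m w) (\<lambda>v. \<Sum>n. Theta_factor \<alpha> t j n v)
      = Q_contour_integral \<alpha> (Q_factor \<alpha> t (int i + 1) 1) (Q_factor \<alpha> t (int j + 1) 1)"
    unfolding Q_contour_integral_def using assms
    by (intro contour_integral_eq arg_cong2[where f = "(*)"]) auto
  moreover have "(\<lambda>m. \<Sum>n. Q_contour_integral \<alpha> (Theta_factor \<alpha> t i m) (Theta_factor \<alpha> t j n))
      sums Q_contour_integral \<alpha> (\<lambda>w. \<Sum>m. Theta_factor \<alpha> t i m w) (\<lambda>v. \<Sum>n. Theta_factor \<alpha> t j n v)"
    unfolding Q_contour_integral_def using assms by (intro double_series(2)) auto
  ultimately show "(\<lambda>m. \<Sum>n. Q_contour_integral \<alpha> (Theta_factor \<alpha> t i m) (Theta_factor \<alpha> t j n))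
      sums Q_contour_integral \<alpha> (Q_factor \<alpha> t (int i + 1) 1) (Q_factor \<alpha> t (int j + 1) 1)"
    by simp
qed

theorem lemmaB3:
  fixes \<alpha> t :: real and N i j :: nat
  assumes "\<alpha> \<ge> 0" and "t \<ge> 0" and "N \<ge> 1"
    and "1 \<le> i" and "i \<le> N" and "1 \<le> j" and "j \<le> N"
  shows "(\<Sum>x. \<Sum>y. of_nat (Theta i (Suc x)) * Q \<alpha> t 1 1 (int (Suc x)) (int (Suc y))
                     * of_nat (Theta j (Suc y)))
         = Q \<alpha> t (int i + 1) (int j + 1) 1 1"
proof -
  define c where "c = complex_of_real (\<alpha>^2) / (2 * pi * \<i>)^2"
  have "of_nat (Theta i (Suc x)) * Q \<alpha> t 1 1 (int (Suc x)) (int (Suc y)) * of_nat (Theta j (Suc y))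
      = c * Q_contour_integral \<alpha> (Theta_factor \<alpha> t i x) (Theta_factor \<alpha> t j y)" for x y
    unfolding Q_eq_Q_contour_integral Q_contour_integral_def Theta_factor_def c_def
    by (simp add: contour_integral_mult_left[symmetric] contour_integral_mult_right[symmetric] mult_ac)
  then have "(\<lambda>x. \<Sum>y. of_nat (Theta i (Suc x)) * Q \<alpha> t 1 1 (int (Suc x)) (int (Suc y))
                        * of_nat (Theta j (Suc y)))
      = (\<lambda>x. c * (\<Sum>y. Q_contour_integral \<alpha> (Theta_factor \<alpha> t i x) (Theta_factor \<alpha> t j y)))"
    by (simp add: suminf_mult Q_contour_integral_Theta_factor_series(1)[OF \<open>\<alpha> \<ge> 0\<close>])
  moreover have "Q \<alpha> t (int i + 1) (int j + 1) 1 1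
      = c * Q_contour_integral \<alpha> (Q_factor \<alpha> t (int i + 1) 1) (Q_factor \<alpha> t (int j + 1) 1)"
    unfolding Q_eq_Q_contour_integral c_def ..
  ultimately show ?thesis
    using sums_mult[OF Q_contour_integral_Theta_factor_series(2)[OF \<open>\<alpha> \<ge> 0\<close>], of c]
    by (simp add: sums_iff)
qed

end
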